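(* Let $p\in(1,2)$, $t\in(2p-2,p)$, $\delta,\varrho>0$, $c_r\ge c_l>0$, $C_D>c_D>1$, and set $\mu:=(\bar a^2\bar r^{-p})^{\frac1{2-p}}$, $\nu:=(\bar a^{-1}\bar r)^{\frac{2p}{2-p}}$ (componentwise). Let $x\in\ell^p_{\bar r}$ with $x\in w^t_{\mu,\nu}$ and $\|x\|_{w^t_{\mu,\nu}}\le\varrho$, let $g^\delta\in\mathbb Y$ with $\|g^\delta-Ax\|_{\mathbb Y}\le\delta$, $\alpha>0$ and $\hat x_\alpha\in R_\alpha(g^\delta)$. There is a constant $C>0$ independent of $x,\delta,\varrho$ such that whenever either $$c_l\varrho^{-\frac{t(2-p)}{2-t}}\delta^{\frac{2(2-p)}{2-t}}\le\alpha\le c_r\varrho^{-\frac{t(2-p)}{2-t}}\delta^{\frac{2(2-p)}{2-t}}\quad\text{or}\quad c_D\delta\le\|g^\delta-A\hat x_\alpha\|_{\mathbb Y}\le C_D\delta,$$ then $\|x-\hat x_\alpha\|_{\ell^p_{\bar r}}\le C\varrho^{\frac{t(2-p)}{p(2-t)}}\delta^{\frac{2(p-t)}{p(2-t)}}$.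
   Context: $\Lambda$ is a countable index set. For a sequence $\bar\omega=(\bar\omega_j)_{j\in\Lambda}$ of positive reals and $p\in(0,\infty)$, $\ell^p_{\bar\omega}:=\{x\in\mathbb R^\Lambda:\|x\|_{\ell^p_{\bar\omega}}<\infty\}$ with $\|x\|_{\ell^p_{\bar\omega}}^p:=\sum_{j\in\Lambda}\bar\omega_j^p|x_j|^p$. For positive sequences $\mu,\nu$ and $t\in(0,\infty)$ the weighted weak space $w^t_{\mu,\nu}:=\{x\in\mathbb R^\Lambda:\|x\|_{w^t_{\mu,\nu}}<\infty\}$ with $\|x\|^t_{w^t_{\mu,\nu}}:=\sup_{\tau>0}\tau^t\sum_{j\in\Lambda}\nu_j\mathbf 1_{\{\mu_j|x_j|>\tau\}}$. Let $\bar a,\bar r$ be sequences of positive reals with $(\bar a_j/\bar r_j)_j$ bounded, so $\ell^p_{\bar r}\subset\ell^2_{\bar a}$ continuously for $p\in(1,2)$. $\mathbb Y$ is a real Hilbert space and $A:\ell^2_{\bar a}\to\mathbb Y$ is bounded linear with $\frac1M\|x\|_{\ell^2_{\bar a}}\le\|Ax\|_{\mathbb Y}\le M\|x\|_{\ell^2_{\bar a}}$ for some $M\ge1$. Penalty $\mathcal R(x):=\frac1p\|x\|_{\ell^p_{\bar r}}^p$ on $\mathbb X=\ell^p_{\bar r}$; $R_\alpha(g):=\operatorname{argmin}_{x\in\ell^p_{\bar r}}\big(\frac1{2\alpha}\|g-Ax\|_{\mathbb Y}^2+\mathcal R(x)\big)$. *)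

theory Defs
  imports "HOL-Analysis.Analysis"
begin

definition lp_space :: "real \<Rightarrow> ('j \<Rightarrow> real) \<Rightarrow> ('j \<Rightarrow> real) set" where
  "lp_space p w = {x. (\<lambda>j. (w j * \<bar>x j\<bar>) powr p) summable_on UNIV}"

definition lp_norm :: "real \<Rightarrow> ('j \<Rightarrow> real) \<Rightarrow> ('j \<Rightarrow> real) \<Rightarrow> real" where
  "lp_norm p w x = (\<Sum>\<^sub>\<infinity>j. (w j * \<bar>x j\<bar>) powr p) powr (1 / p)"

definition weak_norm_pow ::
  "real \<Rightarrow> ('j \<Rightarrow> real) \<Rightarrow> ('j \<Rightarrow> real) \<Rightarrow> ('j \<Rightarrow> real) \<Rightarrow> ennreal" where
  "weak_norm_pow t \<mu> \<nu> x =
     (SUP \<tau>\<in>{0<..}. ennreal (\<tau> powr t) *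
        (\<integral>\<^sup>+ j. ennreal (\<nu> j * indicator {j. \<mu> j * \<bar>x j\<bar> > \<tau>} j) \<partial>count_space UNIV))"

definition weak_space :: "real \<Rightarrow> ('j \<Rightarrow> real) \<Rightarrow> ('j \<Rightarrow> real) \<Rightarrow> ('j \<Rightarrow> real) set" where
  "weak_space t \<mu> \<nu> = {x. weak_norm_pow t \<mu> \<nu> x < \<infinity>}"

definition tikhonov_minimizers ::
  "(('j \<Rightarrow> real) \<Rightarrow> 'y::real_normed_vector) \<Rightarrow> real \<Rightarrow> ('j \<Rightarrow> real) \<Rightarrow> real \<Rightarrow> 'y
     \<Rightarrow> ('j \<Rightarrow> real) set" where
  "tikhonov_minimizers A p r \<alpha> g =
     {x \<in> lp_space p r. \<forall>z \<in> lp_space p r.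
        (1 / (2 * \<alpha>)) * (norm (g - A x))\<^sup>2 + (1 / p) * (lp_norm p r x) powr p
        \<le> (1 / (2 * \<alpha>)) * (norm (g - A z))\<^sup>2 + (1 / p) * (lp_norm p r z) powr p}"

end

theory Submission
  imports Defs
begin

text \<open>Choose the threshold \<open>\<tau>\<close> with \<open>\<delta>\<^sup>2 = \<rho> powr t * \<tau> powr (2 - t)\<close> and call a
  coordinate small if \<open>\<mu> j * \<bar>x j\<bar> \<le> \<tau>\<close> and large otherwise. Summing the weak bound on \<open>x\<close>
  over dyadic layers bounds the sum of \<open>(r j * \<bar>x j\<bar>) powr p\<close> over the small coordinates by
  a multiple of \<open>\<rho> powr t * \<tau> powr (p - t)\<close> (this needs \<open>t < p\<close>), and the sum of
  \<open>\<nu> j * (\<mu> j * \<bar>x j\<bar>) powr (2 * p - 2)\<close> over the large ones by a multiple of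
  \<open>\<rho> powr t * \<tau> powr (2 * p - 2 - t)\<close> (this needs \<open>2 * p - 2 < t\<close>). On small coordinates the
  error is controlled by \<open>\<bar>x j\<bar> + \<bar>xh j\<bar>\<close>. On large ones the tangent inequality of
  \<open>s \<mapsto> s powr p\<close>, summed and combined with the minimality of \<open>xh\<close>, gives a variational
  inequality, and Young's inequality trades the \<open>\<ell>\<^sup>p\<close>-error against the \<open>\<ell>\<^sup>2\<close>-error, which the
  lower bound on \<open>A\<close> controls by the residuals. Either parameter choice balances all terms at the
  level \<open>\<rho> powr t * \<tau> powr (p - t)\<close>, whose \<open>p\<close>-th root is the rate.\<close>

lemma powr_add_le_two_powr:
  fixes u v p :: real
  assumes "u \<ge> 0" "v \<ge> 0" "p > 0"
  shows "(u + v) powr p \<le> 2 powr p * (u powr p + v powr p)"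
proof -
  have "(u + v) powr p \<le> (2 * max u v) powr p" using assms by (intro powr_mono2) auto
  also have "\<dots> = 2 powr p * (max u v) powr p" using assms by (simp add: powr_mult)
  also have "(max u v) powr p \<le> u powr p + v powr p" using assms by (auto simp: max_def)
  finally show ?thesis by (simp add: mult_left_mono)
qed

lemma powr_abs_diff_le:
  fixes w X Y p :: real
  assumes "w \<ge> 0" "p > 0"
  shows "(w * \<bar>X - Y\<bar>) powr p \<le> 2 powr p * ((w * \<bar>X\<bar>) powr p + (w * \<bar>Y\<bar>) powr p)"
proof -
  have "w * \<bar>X - Y\<bar> \<le> w * \<bar>X\<bar> + w * \<bar>Y\<bar>"
    using assms abs_triangle_ineq4[of X Y] by (simp add: distrib_left[symmetric] mult_left_mono)
  then have "(w * \<bar>X - Y\<bar>) powr p \<le> (w * \<bar>X\<bar> + w * \<bar>Y\<bar>) powr p"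
    using assms by (intro powr_mono2) auto
  also have "\<dots> \<le> 2 powr p * ((w * \<bar>X\<bar>) powr p + (w * \<bar>Y\<bar>) powr p)"
    using assms by (intro powr_add_le_two_powr) auto
  finally show ?thesis .
qed

lemma powr_diff_le_tangent:
  fixes p q v :: real
  assumes p: "1 \<le> p" and "0 \<le> q" "0 \<le> v"
  shows "q powr p - v powr p \<le> p * q powr (p - 1) * (q - v)"
proof -
  consider "q = 0" | "v = 0" "q > 0" | "v > 0" "q > 0" using assms by fastforce
  then show ?thesis
  proof cases
    case 2
    then show ?thesis using p by (simp add: powr_diff mult_le_cancel_right1)
  next
    case 3
    have "(p * q powr (p - 1)) * (v - q) \<le> v powr p - q powr p"
    proof (rule convex_on_imp_above_tangent[where A = "{0<..}"])
      show "((\<lambda>x. x powr p) has_real_derivative p * q powr (p - 1)) (at q within {0<..})"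
        using 3 by (auto intro!: derivative_eq_intros)
    qed (use 3 powr_convex[OF p] in \<open>auto simp: interior_open\<close>)
    then show ?thesis by (simp add: algebra_simps)
  qed simp
qed

lemma mult_le_weighted_squares:
  fixes X Y l :: real
  assumes "l > 0"
  shows "X * Y \<le> l / 2 * X\<^sup>2 + 1 / (2 * l) * Y\<^sup>2"
proof -
  have "l / 2 * X\<^sup>2 + 1 / (2 * l) * Y\<^sup>2 - X * Y = (l * X - Y)\<^sup>2 / (2 * l)"
    using assms by (simp add: field_simps power2_eq_square)
  then show ?thesis using assms by (smt (verit) divide_nonneg_pos zero_le_power2)
qed

lemma powr_le_powr_of_less:
  fixes h \<tau> \<beta> p :: real
  assumes "0 < \<tau>" "\<tau> < h" "\<beta> \<le> p"
  shows "h powr \<beta> \<le> \<tau> powr (\<beta> - p) * h powr p"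
proof -
  have "h powr \<beta> = h powr (\<beta> - p) * h powr p" using assms by (simp add: powr_add[symmetric])
  also have "\<dots> \<le> \<tau> powr (\<beta> - p) * h powr p"
    using assms by (intro mult_right_mono powr_mono2') auto
  finally show ?thesis .
qed

lemma balancing_scale:
  fixes \<delta> \<rho> t p :: real
  assumes \<delta>: "\<delta> > 0" and \<rho>: "\<rho> > 0" and t: "t < 2" and p: "p > 0"
  obtains \<tau> where "\<tau> > 0" and "\<delta>\<^sup>2 = \<rho> powr t * \<tau> powr (2 - t)"
    and "\<rho> powr (- t * (2 - p) / (2 - t)) * \<delta> powr (2 * (2 - p) / (2 - t)) = \<tau> powr (2 - p)"
    and "(\<rho> powr t * \<tau> powr (p - t)) powr (1 / p)
         = \<rho> powr (t * (2 - p) / (p * (2 - t))) * \<delta> powr (2 * (p - t) / (p * (2 - t)))"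
proof
  define \<tau> where "\<tau> = \<delta> powr (2 / (2 - t)) * \<rho> powr (- t / (2 - t))"
  show \<tau>: "\<tau> > 0" unfolding \<tau>_def using \<delta> \<rho> by simp
  have "2 - t \<noteq> 0" "t * t + 4 - t * 4 \<noteq> 0"
    using t mult_pos_pos[of "2 - t" "2 - t"] by (auto simp: algebra_simps)
  then have ln_\<tau>: "ln \<tau> = (2 * ln \<delta> - t * ln \<rho>) / (2 - t)"
    unfolding \<tau>_def using \<delta> \<rho> by (simp add: ln_mult field_simps)
  show "\<delta>\<^sup>2 = \<rho> powr t * \<tau> powr (2 - t)"
    by (rule ln_inj_iff[THEN iffD1])
       (use \<delta> \<rho> \<tau> \<open>2 - t \<noteq> 0\<close> \<open>t * t + 4 - t * 4 \<noteq> 0\<close> in \<open>simp_all add: ln_mult ln_realpow ln_\<tau> field_simps\<close>)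
  show "\<rho> powr (- t * (2 - p) / (2 - t)) * \<delta> powr (2 * (2 - p) / (2 - t)) = \<tau> powr (2 - p)"
    by (rule ln_inj_iff[THEN iffD1])
       (use \<delta> \<rho> \<tau> \<open>2 - t \<noteq> 0\<close> \<open>t * t + 4 - t * 4 \<noteq> 0\<close> in \<open>simp_all add: ln_mult ln_\<tau> field_simps\<close>)
  show "(\<rho> powr t * \<tau> powr (p - t)) powr (1 / p)
         = \<rho> powr (t * (2 - p) / (p * (2 - t))) * \<delta> powr (2 * (p - t) / (p * (2 - t)))"
  proof (rule ln_inj_iff[THEN iffD1])
    have "ln ((\<rho> powr t * \<tau> powr (p - t)) powr (1 / p)) = (t * ln \<rho> + (p - t) * ln \<tau>) / p"
      using \<rho> \<tau> by (simp add: ln_mult ln_powr)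
    also have "\<dots> = (t * (2 - p) * ln \<rho> + 2 * (p - t) * ln \<delta>) / (2 - t) / p"
      unfolding ln_\<tau> using \<open>2 - t \<noteq> 0\<close> by (simp add: field_simps)
    also have "\<dots> = ln (\<rho> powr (t * (2 - p) / (p * (2 - t))) * \<delta> powr (2 * (p - t) / (p * (2 - t))))"
      using \<rho> \<delta> by (simp add: ln_mult ln_powr add_divide_distrib mult.commute)
    finally show "ln ((\<rho> powr t * \<tau> powr (p - t)) powr (1 / p))
      = ln (\<rho> powr (t * (2 - p) / (p * (2 - t))) * \<delta> powr (2 * (p - t) / (p * (2 - t))))" .
  qed (use \<rho> \<tau> \<delta> in auto)
qed

section \<open>Tail bounds and dyadic summation\<close>

definition tail_bound :: "('j \<Rightarrow> real) \<Rightarrow> ('j \<Rightarrow> real) \<Rightarrow> real \<Rightarrow> real \<Rightarrow> bool" where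
  "tail_bound \<nu> h t R \<longleftrightarrow>
     (\<forall>s>0. \<forall>F. finite F \<longrightarrow> (\<Sum>j\<in>F. if s < h j then \<nu> j else 0) \<le> R * s powr (- t))"

lemma weak_norm_pow_le_imp_tail_bound:
  fixes \<mu> \<nu> x :: "'j \<Rightarrow> real"
  assumes nu: "\<And>j. \<nu> j \<ge> 0" and le: "weak_norm_pow t \<mu> \<nu> x \<le> ennreal (\<rho> powr t)"
  shows "tail_bound \<nu> (\<lambda>j. \<mu> j * \<bar>x j\<bar>) t (\<rho> powr t)"
  unfolding tail_bound_def
proof (intro allI impI)
  fix s :: real and F :: "'j set"
  assume s: "s > 0" and F: "finite F"
  define f where "f j = ennreal (\<nu> j * indicator {j. s < \<mu> j * \<bar>x j\<bar>} j)" for j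
  define S where "S = (\<Sum>j\<in>F. if s < \<mu> j * \<bar>x j\<bar> then \<nu> j else 0)"
  have "S \<ge> 0" unfolding S_def using nu by (intro sum_nonneg) auto
  have "ennreal S = (\<integral>\<^sup>+ j. f j \<partial>count_space F)"
    unfolding S_def f_def using nu F
    by (subst sum_ennreal[symmetric])
       (auto intro!: sum.cong simp: indicator_def nn_integral_count_space_finite sum.inter_restrict)
  also have "\<dots> \<le> (\<integral>\<^sup>+ j. f j \<partial>count_space UNIV)"
    by (auto simp: nn_integral_count_space_indicator indicator_def intro!: nn_integral_mono)
  finally have "ennreal (s powr t * S) \<le> ennreal (s powr t) * (\<integral>\<^sup>+ j. f j \<partial>count_space UNIV)"
    using \<open>S \<ge> 0\<close> by (simp add: ennreal_mult mult_left_mono)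
  also have "\<dots> \<le> weak_norm_pow t \<mu> \<nu> x"
    unfolding weak_norm_pow_def f_def using s by (intro SUP_upper) auto
  also note le
  finally have "s powr t * S \<le> \<rho> powr t"
    by (simp add: ennreal_le_iff)
  then have "s powr (- t) * (s powr t * S) \<le> \<rho> powr t * s powr (- t)"
    by (metis mult.commute mult_left_mono powr_ge_zero)
  then show "S \<le> \<rho> powr t * s powr (- t)"
    using s by (simp add: mult.assoc[symmetric] powr_add[symmetric])
qed

lemma powr_div_two_power:
  fixes \<tau> s :: real assumes "\<tau> > 0"
  shows "(\<tau> / 2 ^ k) powr s = \<tau> powr s * (2 powr (- s)) ^ k"
proof -
  have "(\<tau> / 2 ^ k) powr s = \<tau> powr s / (2 powr s) ^ k"
    using assms by (simp add: powr_divide powr_realpow[symmetric] powr_powr powr_power mult.commute)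
  then show ?thesis by (simp add: powr_minus power_inverse divide_inverse)
qed

lemma powr_mult_two_power:
  fixes \<tau> s :: real assumes "\<tau> > 0"
  shows "(\<tau> * 2 ^ k) powr s = \<tau> powr s * (2 powr s) ^ k"
  using assms by (simp add: powr_mult powr_realpow[symmetric] powr_powr powr_power mult.commute)

lemma sum_le_suminf_of_levels:
  fixes f :: "'j \<Rightarrow> real" and g :: "nat \<Rightarrow> 'j \<Rightarrow> real"
  assumes "finite F" and f_le: "\<And>j. j \<in> F \<Longrightarrow> f j \<le> (\<Sum>k. g k j)"
    and g_summable: "\<And>j. j \<in> F \<Longrightarrow> summable (\<lambda>k. g k j)"
    and level_le: "\<And>k. (\<Sum>j\<in>F. g k j) \<le> b k" and "summable b"
  shows "sum f F \<le> (\<Sum>k. b k)"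
proof -
  have "sum f F \<le> (\<Sum>j\<in>F. \<Sum>k. g k j)" by (rule sum_mono) (rule f_le)
  also have "\<dots> = (\<Sum>k. \<Sum>j\<in>F. g k j)" by (rule suminf_sum[symmetric]) (rule g_summable)
  also have "\<dots> \<le> (\<Sum>k. b k)"
    using assms by (intro suminf_le level_le summable_sum g_summable) auto
  finally show ?thesis .
qed

lemma exists_dyadic_below:
  fixes h \<tau> :: real assumes "0 < h" "h \<le> \<tau>"
  shows "\<exists>m. \<tau> / 2 ^ (m + 1) < h \<and> h \<le> \<tau> / 2 ^ m"
proof -
  define P where "P n \<longleftrightarrow> \<tau> / 2 ^ (n + 1) < h" for n :: nat
  obtain n where "\<tau> / h < 2 ^ n" using real_arch_pow[of 2 "\<tau> / h"] by auto
  then have "P n" using assms unfolding P_def by (simp add: field_simps)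
  define m where "m = (LEAST n. P n)"
  have "P m" unfolding m_def by (rule LeastI) (rule \<open>P n\<close>)
  moreover have "h \<le> \<tau> / 2 ^ m"
  proof (cases m)
    case (Suc k)
    then have "\<not> P k" unfolding m_def by (metis Suc_n_not_le_n Least_le)
    then show ?thesis using Suc unfolding P_def by simp
  qed (use assms in simp)
  ultimately show ?thesis unfolding P_def by blast
qed

lemma exists_dyadic_above:
  fixes h \<tau> :: real assumes "0 < \<tau>" "\<tau> < h"
  shows "\<exists>m. \<tau> * 2 ^ m < h \<and> h \<le> \<tau> * 2 ^ (m + 1)"
proof -
  define P where "P n \<longleftrightarrow> h \<le> \<tau> * 2 ^ (n + 1)" for n :: nat
  obtain n where "h / \<tau> < 2 ^ n" using real_arch_pow[of 2 "h / \<tau>"] by auto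
  then have "P n" using assms unfolding P_def by (simp add: field_simps)
  define m where "m = (LEAST n. P n)"
  have "P m" unfolding m_def by (rule LeastI) (rule \<open>P n\<close>)
  moreover have "\<tau> * 2 ^ m < h"
  proof (cases m)
    case (Suc k)
    then have "\<not> P k" unfolding m_def by (metis Suc_n_not_le_n Least_le)
    then show ?thesis using Suc unfolding P_def by simp
  qed (use assms in simp)
  ultimately show ?thesis unfolding P_def by blast
qed

text \<open>The layers \<open>\<tau> / 2 ^ (k + 1) < h j \<le> \<tau> / 2 ^ k\<close> carry \<open>\<nu>\<close>-mass at most
  \<open>R * (\<tau> / 2 ^ (k + 1)) powr (- t)\<close>; weighted by \<open>(\<tau> / 2 ^ k) powr p\<close> they form a geometric
  series of ratio \<open>2 powr (t - p) < 1\<close>. Above \<open>\<tau>\<close> the layers \<open>\<tau> * 2 ^ k < h j\<close> are used instead.\<close>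

lemma tail_bound_sum_below:
  fixes h \<nu> :: "'j \<Rightarrow> real"
  assumes tail: "tail_bound \<nu> h t R" and h: "\<And>j. h j \<ge> 0" and nu: "\<And>j. \<nu> j \<ge> 0"
    and \<tau>: "\<tau> > 0" and p: "0 < p" "t < p" and F: "finite F"
  shows "(\<Sum>j\<in>F. if h j \<le> \<tau> then \<nu> j * h j powr p else 0)
         \<le> 2 powr t / (1 - 2 powr (t - p)) * R * \<tau> powr (p - t)"
proof -
  define g where "g k j = (if \<tau> / 2 ^ (k + 1) < h j then \<nu> j * (\<tau> / 2 ^ k) powr p else 0)"
    for k j
  define b where "b k = 2 powr t * R * \<tau> powr (p - t) * (2 powr (t - p)) ^ k" for k :: nat
  have ratio: "2 powr (t - p) < 1" "2 powr (- p) < 1" using p by (auto intro!: powr_less_one)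
  have g_nonneg: "g k j \<ge> 0" for k j unfolding g_def using nu by simp
  have g_summable: "summable (\<lambda>k. g k j)" for j
  proof (rule summable_comparison_test')
    show "summable (\<lambda>k. \<nu> j * \<tau> powr p * (2 powr (- p)) ^ k)"
      using ratio by (intro summable_mult summable_geometric) auto
    show "norm (g k j) \<le> \<nu> j * \<tau> powr p * (2 powr (- p)) ^ k" for k
      using g_nonneg[of k j] nu[of j] \<tau>
      by (auto simp: g_def powr_div_two_power mult.assoc)
  qed
  have "(\<Sum>j\<in>F. if h j \<le> \<tau> then \<nu> j * h j powr p else 0) \<le> (\<Sum>k. b k)"
  proof (rule sum_le_suminf_of_levels[OF F _ g_summable])
    fix j
    show "(if h j \<le> \<tau> then \<nu> j * h j powr p else 0) \<le> (\<Sum>k. g k j)"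
    proof (cases "0 < h j \<and> h j \<le> \<tau>")
      case True
      then obtain m where m: "\<tau> / 2 ^ (m + 1) < h j" "h j \<le> \<tau> / 2 ^ m"
        using exists_dyadic_below by blast
      have "\<nu> j * h j powr p \<le> g m j"
        unfolding g_def using m True p nu[of j] by (auto intro!: mult_left_mono powr_mono2)
      also have "g m j \<le> (\<Sum>k. g k j)"
        using sum_le_suminf[OF g_summable, of "{m}"] g_nonneg by simp
      finally show ?thesis using True by simp
    qed (use h[of j] suminf_nonneg[OF g_summable g_nonneg] in auto)
  next
    fix k
    have "(\<Sum>j\<in>F. g k j) = (\<tau> / 2 ^ k) powr p * (\<Sum>j\<in>F. if \<tau> / 2 ^ (k + 1) < h j then \<nu> j else 0)"
      unfolding g_def sum_distrib_left by (intro sum.cong) auto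
    also have "\<dots> \<le> (\<tau> / 2 ^ k) powr p * (R * (\<tau> / 2 ^ (k + 1)) powr (- t))"
      using tail \<tau> F unfolding tail_bound_def by (intro mult_left_mono) auto
    also have "\<dots> = R * (\<tau> powr p * \<tau> powr (- t)) * 2 powr t * (2 powr (- p) * 2 powr t) ^ k"
      using powr_div_two_power[OF \<tau>, of k p] powr_div_two_power[OF \<tau>, of "k + 1" "- t"]
      by (simp add: power_mult_distrib)
    also have "\<dots> = b k"
      unfolding b_def by (simp add: powr_add[symmetric])
    finally show "(\<Sum>j\<in>F. g k j) \<le> b k" .
  next
    show "summable b" unfolding b_def using ratio by (intro summable_mult summable_geometric) auto
  qed
  also have "(\<Sum>k. b k) = 2 powr t / (1 - 2 powr (t - p)) * R * \<tau> powr (p - t)"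
    unfolding b_def using ratio by (simp add: suminf_mult suminf_geometric field_simps)
  finally show ?thesis .
qed

lemma tail_bound_sum_above:
  fixes h \<nu> :: "'j \<Rightarrow> real"
  assumes tail: "tail_bound \<nu> h t R" and nu: "\<And>j. \<nu> j \<ge> 0"
    and \<tau>: "\<tau> > 0" and \<beta>: "0 \<le> \<beta>" "\<beta> < t" and F: "finite F"
  shows "(\<Sum>j\<in>F. if \<tau> < h j then \<nu> j * h j powr \<beta> else 0)
         \<le> 2 powr \<beta> / (1 - 2 powr (\<beta> - t)) * R * \<tau> powr (\<beta> - t)"
proof -
  define g where "g k j = (if \<tau> * 2 ^ k < h j then \<nu> j * (\<tau> * 2 ^ (k + 1)) powr \<beta> else 0)"
    for k j
  define b where "b k = 2 powr \<beta> * R * \<tau> powr (\<beta> - t) * (2 powr (\<beta> - t)) ^ k" for k :: nat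
  have ratio: "2 powr (\<beta> - t) < 1" using \<beta> by (auto intro!: powr_less_one)
  have g_nonneg: "g k j \<ge> 0" for k j unfolding g_def using nu by simp
  have g_summable: "summable (\<lambda>k. g k j)" for j
  proof -
    obtain K where K: "h j / \<tau> < 2 ^ K" using real_arch_pow[of 2 "h j / \<tau>"] by auto
    have "g k j = 0" if "k \<ge> K" for k
    proof -
      have "h j < \<tau> * 2 ^ K" using K \<tau> by (simp add: field_simps)
      also have "\<dots> \<le> \<tau> * 2 ^ k" using \<tau> that by simp
      finally show ?thesis unfolding g_def by simp
    qed
    then show ?thesis by (intro summable_finite[of "{..<K}"]) auto
  qed
  have "(\<Sum>j\<in>F. if \<tau> < h j then \<nu> j * h j powr \<beta> else 0) \<le> (\<Sum>k. b k)"
  proof (rule sum_le_suminf_of_levels[OF F _ g_summable])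
    fix j
    show "(if \<tau> < h j then \<nu> j * h j powr \<beta> else 0) \<le> (\<Sum>k. g k j)"
    proof (cases "\<tau> < h j")
      case True
      then obtain m where m: "\<tau> * 2 ^ m < h j" "h j \<le> \<tau> * 2 ^ (m + 1)"
        using exists_dyadic_above \<tau> by blast
      have "\<nu> j * h j powr \<beta> \<le> g m j"
        unfolding g_def using m True \<tau> \<beta> nu[of j] by (auto intro!: mult_left_mono powr_mono2)
      also have "g m j \<le> (\<Sum>k. g k j)"
        using sum_le_suminf[OF g_summable, of "{m}"] g_nonneg by simp
      finally show ?thesis using True by simp
    qed (use suminf_nonneg[OF g_summable g_nonneg] in auto)
  next
    fix k
    have "(\<Sum>j\<in>F. g k j) = (\<tau> * 2 ^ (k + 1)) powr \<beta> * (\<Sum>j\<in>F. if \<tau> * 2 ^ k < h j then \<nu> j else 0)"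
      unfolding g_def sum_distrib_left by (intro sum.cong) auto
    also have "\<dots> \<le> (\<tau> * 2 ^ (k + 1)) powr \<beta> * (R * (\<tau> * 2 ^ k) powr (- t))"
      using tail \<tau> F unfolding tail_bound_def by (intro mult_left_mono) auto
    also have "\<dots> = R * (\<tau> powr \<beta> * \<tau> powr (- t)) * 2 powr \<beta> * (2 powr \<beta> * 2 powr (- t)) ^ k"
      using powr_mult_two_power[OF \<tau>, of "k + 1" \<beta>] powr_mult_two_power[OF \<tau>, of k "- t"]
      by (simp add: power_mult_distrib)
    also have "\<dots> = b k"
      unfolding b_def by (simp add: powr_add[symmetric])
    finally show "(\<Sum>j\<in>F. g k j) \<le> b k" .
  next
    show "summable b" unfolding b_def using ratio by (intro summable_mult summable_geometric) auto
  qed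
  also have "(\<Sum>k. b k) = 2 powr \<beta> / (1 - 2 powr (\<beta> - t)) * R * \<tau> powr (\<beta> - t)"
    unfolding b_def using ratio by (simp add: suminf_mult suminf_geometric field_simps)
  finally show ?thesis .
qed

section \<open>Weighted sequence spaces\<close>

lemma lp_norm_powr:
  assumes "p > 0"
  shows "lp_norm p w x powr p = (\<Sum>\<^sub>\<infinity>j. (w j * \<bar>x j\<bar>) powr p)"
  using assms by (simp add: lp_norm_def powr_powr infsum_nonneg)

lemma lp_space_diff:
  assumes w: "\<And>j. w j \<ge> 0" and p: "p > 0" and x: "x \<in> lp_space p w" and y: "y \<in> lp_space p w"
  shows "(\<lambda>j. x j - y j) \<in> lp_space p w"
proof -
  have "(\<lambda>j. 2 powr p * ((w j * \<bar>x j\<bar>) powr p + (w j * \<bar>y j\<bar>) powr p)) summable_on UNIV"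
    using x y unfolding lp_space_def by (intro summable_on_cmult_right summable_on_add) auto
  then show ?thesis
    unfolding lp_space_def using powr_abs_diff_le[OF w p] by (auto intro: summable_on_comparison_test)
qed

lemma lp_space_mono:
  assumes p: "0 < p" "p \<le> q" and v: "\<And>j. 0 \<le> v j" "\<And>j. v j \<le> K * w j"
    and w: "\<And>j. 0 \<le> w j" and x: "x \<in> lp_space p w"
  shows "x \<in> lp_space q v"
proof -
  define S where "S = (\<Sum>\<^sub>\<infinity>j. (w j * \<bar>x j\<bar>) powr p)"
  have summable: "(\<lambda>j. (w j * \<bar>x j\<bar>) powr p) summable_on UNIV"
    using x unfolding lp_space_def by simp
  have "(v j * \<bar>x j\<bar>) powr q \<le> (K powr q * S powr ((q - p) / p)) * (w j * \<bar>x j\<bar>) powr p" for j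
  proof (cases "w j * \<bar>x j\<bar> = 0")
    case True
    then have "(v j * \<bar>x j\<bar>) powr q = 0"
      using v[of j] w[of j] by (auto simp: mult_le_0_iff)
    then show ?thesis by (metis powr_ge_zero mult_nonneg_nonneg)
  next
    case False
    define y where "y = w j * \<bar>x j\<bar>"
    have y: "y > 0" using False w[of j] unfolding y_def by (simp add: less_le)
    have "0 \<le> K * w j" by (rule order_trans[OF v])
    then have "K \<ge> 0" using y unfolding y_def by (simp add: zero_le_mult_iff zero_less_mult_iff)
    have "y powr p \<le> S"
      unfolding S_def y_def using finite_sum_le_infsum[OF summable, of "{j}"] by simp
    then have "(y powr p) powr ((q - p) / p) \<le> S powr ((q - p) / p)"
      using p by (intro powr_mono2) auto
    then have yS: "y powr (q - p) \<le> S powr ((q - p) / p)"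
      using p by (simp add: powr_powr)
    have "(v j * \<bar>x j\<bar>) powr q \<le> (K * y) powr q"
      unfolding y_def using v[of j] p by (intro powr_mono2) (auto simp flip: mult.assoc intro: mult_right_mono)
    also have "\<dots> = K powr q * (y powr (q - p) * y powr p)"
      using \<open>K \<ge> 0\<close> y by (simp add: powr_mult powr_add[symmetric])
    also have "\<dots> \<le> K powr q * (S powr ((q - p) / p) * y powr p)"
      using yS by (intro mult_left_mono mult_right_mono) auto
    finally show ?thesis unfolding y_def by (simp add: mult.assoc)
  qed
  then show ?thesis unfolding lp_space_def
    by (auto intro!: summable_on_comparison_test[OF summable_on_cmult_right[OF summable]])
qed

lemma summable_on_if_UNIV:
  fixes f :: "'j \<Rightarrow> real"
  assumes "f summable_on UNIV"
  shows "(\<lambda>j. if P j then f j else 0) summable_on UNIV"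
proof -
  have "f summable_on {j. P j}" using assms by (rule summable_on_subset_banach) simp
  then show ?thesis by (rule summable_on_cong_neutral[THEN iffD1, rotated -1]) auto
qed

lemma tikhonov_minimizer_le:
  assumes xh: "xh \<in> tikhonov_minimizers A p r \<alpha> g" and x: "x \<in> lp_space p r"
    and \<alpha>: "\<alpha> > 0" and p: "p > 0"
  shows "lp_norm p r xh powr p - lp_norm p r x powr p
         \<le> p * ((norm (g - A x))\<^sup>2 - (norm (g - A xh))\<^sup>2) / (2 * \<alpha>)"
proof -
  have "(norm (g - A xh))\<^sup>2 / (2 * \<alpha>) + lp_norm p r xh powr p / p
      \<le> (norm (g - A x))\<^sup>2 / (2 * \<alpha>) + lp_norm p r x powr p / p"
    using xh x unfolding tikhonov_minimizers_def by auto
  then have "p * ((lp_norm p r xh powr p - lp_norm p r x powr p) / p)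
      \<le> p * (((norm (g - A x))\<^sup>2 - (norm (g - A xh))\<^sup>2) / (2 * \<alpha>))"
    using p by (intro mult_left_mono) (auto simp: diff_divide_distrib)
  then show ?thesis using p by simp
qed

section \<open>Splitting at the threshold\<close>

locale tikhonov_weights =
  fixes a r :: "'j \<Rightarrow> real" and p :: real
  assumes a_pos: "\<And>j. a j > 0" and r_pos: "\<And>j. r j > 0"
    and ar_bdd: "bounded (range (\<lambda>j. a j / r j))"
    and p_gt_1: "1 < p" and p_lt_2: "p < 2"
begin

definition mu :: "'j \<Rightarrow> real" where
  "mu j = (a j ^ 2 * r j powr (- p)) powr (1 / (2 - p))"

definition nu :: "'j \<Rightarrow> real" where
  "nu j = (r j / a j) powr (2 * p / (2 - p))"

lemma mu_pos: "mu j > 0" and nu_pos: "nu j > 0"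
  using a_pos[of j] r_pos[of j] by (simp_all add: mu_def nu_def)

lemma nu_mu_powr:
  assumes "y \<ge> 0"
  shows "nu j * (mu j * y) powr p = (r j * y) powr p"
proof (cases "y = 0")
  case False
  with assms have "y > 0" by simp
  show ?thesis
  proof (rule ln_inj_iff[THEN iffD1])
    have "2 - p \<noteq> 0" "p * p + 4 - p * 4 \<noteq> 0"
      using p_lt_2 mult_pos_pos[of "2 - p" "2 - p"] by (auto simp: algebra_simps)
    then show "ln (nu j * (mu j * y) powr p) = ln ((r j * y) powr p)"
      using \<open>y > 0\<close> a_pos[of j] r_pos[of j] by (simp add: mu_def nu_def ln_mult ln_div ln_realpow field_simps)
  qed (use \<open>y > 0\<close> r_pos[of j] mu_pos[of j] nu_pos[of j] in auto)
qed (use p_gt_1 in simp)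

lemma nu_mu_powr_sq:
  assumes "y \<ge> 0"
  shows "nu j * (mu j * y) powr (2 * p - 2) = ((r j * y) powr (p - 1) * r j / a j)\<^sup>2"
proof (cases "y = 0")
  case False
  with assms have "y > 0" by simp
  show ?thesis
  proof (rule ln_inj_iff[THEN iffD1])
    have "2 - p \<noteq> 0" "p * p + 4 - p * 4 \<noteq> 0"
      using p_lt_2 mult_pos_pos[of "2 - p" "2 - p"] by (auto simp: algebra_simps)
    then show "ln (nu j * (mu j * y) powr (2 * p - 2)) = ln (((r j * y) powr (p - 1) * r j / a j)\<^sup>2)"
      using \<open>y > 0\<close> a_pos[of j] r_pos[of j]
      by (simp add: mu_def nu_def ln_mult ln_div ln_realpow field_simps)
  qed (use \<open>y > 0\<close> a_pos[of j] r_pos[of j] mu_pos[of j] nu_pos[of j] in auto)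
qed (use p_gt_1 in simp)

lemma young_weighted:
  assumes \<tau>: "\<tau> > 0" and y: "y \<ge> 0"
  shows "(r j * y) powr p \<le> p / 2 * \<tau> powr (p - 2) * (a j * y) powr 2 + (2 - p) / 2 * \<tau> powr p * nu j"
proof (cases "y = 0")
  case False
  with y have "y > 0" by simp
  have "(r j * y) powr p
      = (\<tau> powr (p - 2) * (a j * y) powr 2) powr (p / 2) * (\<tau> powr p * nu j) powr ((2 - p) / 2)"
  proof (rule ln_inj_iff[THEN iffD1])
    show "ln ((r j * y) powr p)
      = ln ((\<tau> powr (p - 2) * (a j * y) powr 2) powr (p / 2) * (\<tau> powr p * nu j) powr ((2 - p) / 2))"
      using a_pos[of j] r_pos[of j] p_lt_2 \<open>y > 0\<close> \<tau>
      by (simp add: nu_def ln_mult ln_div ln_realpow field_simps)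
  qed (use \<open>y > 0\<close> \<tau> a_pos[of j] r_pos[of j] nu_pos[of j] in auto)
  also have "\<dots> \<le> p / 2 * (\<tau> powr (p - 2) * (a j * y) powr 2) + (2 - p) / 2 * (\<tau> powr p * nu j)"
    using p_gt_1 p_lt_2 a_pos[of j] \<open>y > 0\<close> \<tau> nu_pos[of j]
    by (intro Youngs_inequality_0) (auto simp: field_simps)
  finally show ?thesis by (simp add: mult.assoc)
qed (use p_gt_1 p_lt_2 nu_pos[of j] \<tau> in simp)

lemma lp_space_imp_lp2: "x \<in> lp_space p r \<Longrightarrow> x \<in> lp_space 2 a"
proof -
  assume x: "x \<in> lp_space p r"
  obtain K where "\<And>j. \<bar>a j / r j\<bar> \<le> K" using ar_bdd unfolding bounded_iff by auto
  then have "a j \<le> K * r j" for j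
    using a_pos[of j] r_pos[of j] by (smt (verit) pos_divide_le_eq)
  then show ?thesis
    using lp_space_mono[OF _ _ _ _ _ x] p_gt_1 p_lt_2 a_pos r_pos
    by (metis less_eq_real_def less_trans zero_less_one)
qed

lemma variational_pointwise:
  assumes l: "l > 0"
  shows "(r j * \<bar>X\<bar>) powr p \<le> (r j * \<bar>Y\<bar>) powr p
           + p * l / 2 * (nu j * (mu j * \<bar>X\<bar>) powr (2 * p - 2)) + p / (2 * l) * (a j * \<bar>X - Y\<bar>) powr 2"
proof -
  define q where "q = r j * \<bar>X\<bar>"
  define v where "v = r j * \<bar>Y\<bar>"
  define D where "D = q powr (p - 1) * r j / a j"
  have "q powr p - v powr p \<le> p * q powr (p - 1) * (q - v)"
    unfolding q_def v_def using p_gt_1 r_pos[of j] by (intro powr_diff_le_tangent) auto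
  also have "\<dots> \<le> p * q powr (p - 1) * (r j * \<bar>X - Y\<bar>)"
    unfolding q_def v_def using p_gt_1 r_pos[of j] abs_triangle_ineq2[of X Y]
    by (intro mult_left_mono) (auto simp flip: right_diff_distrib)
  also have "\<dots> = p * (D * (a j * \<bar>X - Y\<bar>))"
    unfolding D_def using a_pos[of j] by (simp add: field_simps)
  also have "\<dots> \<le> p * (l / 2 * D\<^sup>2 + 1 / (2 * l) * (a j * \<bar>X - Y\<bar>)\<^sup>2)"
    using p_gt_1 l by (intro mult_left_mono mult_le_weighted_squares) auto
  also have "D\<^sup>2 = nu j * (mu j * \<bar>X\<bar>) powr (2 * p - 2)"
    unfolding D_def q_def by (simp add: nu_mu_powr_sq)
  finally show ?thesis
    using a_pos[of j] by (simp add: q_def v_def field_simps)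
qed

lemma variational_pointwise_split:
  assumes l: "l > 0"
  shows "2 powr (- p) * (if mu j * \<bar>X\<bar> \<le> \<tau> then (r j * \<bar>X - Y\<bar>) powr p else 0) + (r j * \<bar>X\<bar>) powr p
       \<le> (r j * \<bar>Y\<bar>) powr p + 2 * (if mu j * \<bar>X\<bar> \<le> \<tau> then (r j * \<bar>X\<bar>) powr p else 0)
         + p * l / 2 * (if \<tau> < mu j * \<bar>X\<bar> then nu j * (mu j * \<bar>X\<bar>) powr (2 * p - 2) else 0)
         + p / (2 * l) * (a j * \<bar>X - Y\<bar>) powr 2"
proof (cases "mu j * \<bar>X\<bar> \<le> \<tau>")
  case True
  have "2 powr (- p) * (r j * \<bar>X - Y\<bar>) powr p \<le> (r j * \<bar>X\<bar>) powr p + (r j * \<bar>Y\<bar>) powr p"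
    using powr_abs_diff_le[of "r j" p X Y] r_pos[of j] p_gt_1
    by (simp add: powr_minus divide_simps mult.commute)
  moreover have "0 \<le> p / (2 * l) * (a j * \<bar>X - Y\<bar>) powr 2" using p_gt_1 l by simp
  ultimately show ?thesis using True by simp
qed (use variational_pointwise[OF l, of j X Y] in simp)

definition small_part :: "('j \<Rightarrow> real) \<Rightarrow> real \<Rightarrow> ('j \<Rightarrow> real) \<Rightarrow> real" where
  "small_part x \<tau> f = (\<Sum>\<^sub>\<infinity>j. if mu j * \<bar>x j\<bar> \<le> \<tau> then f j else 0)"

definition large_part :: "('j \<Rightarrow> real) \<Rightarrow> real \<Rightarrow> ('j \<Rightarrow> real) \<Rightarrow> real" where
  "large_part x \<tau> f = (\<Sum>\<^sub>\<infinity>j. if \<tau> < mu j * \<bar>x j\<bar> then f j else 0)"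

lemma small_part_add_large_part:
  assumes "f summable_on UNIV"
  shows "small_part x \<tau> f + large_part x \<tau> f = (\<Sum>\<^sub>\<infinity>j. f j)"
  unfolding small_part_def large_part_def
  by (subst infsum_add[symmetric]) (auto intro!: summable_on_if_UNIV assms infsum_cong)

lemma large_nu_mu_powr_le:
  assumes "0 < \<tau>" "\<tau> < mu j * \<bar>y\<bar>" "\<beta> \<le> p"
  shows "nu j * (mu j * \<bar>y\<bar>) powr \<beta> \<le> \<tau> powr (\<beta> - p) * (r j * \<bar>y\<bar>) powr p"
proof -
  have "nu j * (mu j * \<bar>y\<bar>) powr \<beta> \<le> nu j * (\<tau> powr (\<beta> - p) * (mu j * \<bar>y\<bar>) powr p)"
    using assms nu_pos[of j] by (intro mult_left_mono powr_le_powr_of_less) auto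
  also have "\<dots> = \<tau> powr (\<beta> - p) * (nu j * (mu j * \<bar>y\<bar>) powr p)" by (simp add: ac_simps)
  finally show ?thesis by (simp add: nu_mu_powr)
qed

lemma summable_large_nu_mu_powr:
  assumes x: "x \<in> lp_space p r" and \<tau>: "\<tau> > 0" and \<beta>: "\<beta> \<le> p"
  shows "(\<lambda>j. if \<tau> < mu j * \<bar>x j\<bar> then nu j * (mu j * \<bar>x j\<bar>) powr \<beta> else 0) summable_on UNIV"
proof (rule summable_on_comparison_test)
  show "(\<lambda>j. \<tau> powr (\<beta> - p) * (r j * \<bar>x j\<bar>) powr p) summable_on UNIV"
    using x unfolding lp_space_def by (intro summable_on_cmult_right) simp
qed (use large_nu_mu_powr_le[OF \<tau> _ \<beta>] nu_pos[THEN less_imp_le] in \<open>auto intro!: mult_nonneg_nonneg\<close>)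

lemma summable_large_nu:
  assumes x: "x \<in> lp_space p r" and \<tau>: "\<tau> > 0"
  shows "(\<lambda>j. if \<tau> < mu j * \<bar>x j\<bar> then nu j else 0) summable_on UNIV"
proof -
  have "(\<lambda>j. if \<tau> < mu j * \<bar>x j\<bar> then nu j * (mu j * \<bar>x j\<bar>) powr 0 else 0)
      = (\<lambda>j. if \<tau> < mu j * \<bar>x j\<bar> then nu j else 0)"
    using \<tau> by (auto intro!: ext)
  then show ?thesis using summable_large_nu_mu_powr[OF x \<tau>, of 0] p_gt_1 by simp
qed

lemma variational_inequality_split:
  assumes x: "x \<in> lp_space p r" and xh: "xh \<in> lp_space p r" and \<tau>: "\<tau> > 0" and l: "l > 0"
  shows "2 powr (- p) * small_part x \<tau> (\<lambda>j. (r j * \<bar>x j - xh j\<bar>) powr p) + lp_norm p r x powr p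
       \<le> lp_norm p r xh powr p + 2 * small_part x \<tau> (\<lambda>j. (r j * \<bar>x j\<bar>) powr p)
         + p * l / 2 * large_part x \<tau> (\<lambda>j. nu j * (mu j * \<bar>x j\<bar>) powr (2 * p - 2))
         + p / (2 * l) * lp_norm 2 a (\<lambda>j. x j - xh j) powr 2"
proof -
  define e where "e j = (if mu j * \<bar>x j\<bar> \<le> \<tau> then (r j * \<bar>x j - xh j\<bar>) powr p else 0)" for j
  define S where "S j = (if mu j * \<bar>x j\<bar> \<le> \<tau> then (r j * \<bar>x j\<bar>) powr p else 0)" for j
  define B where "B j = (if \<tau> < mu j * \<bar>x j\<bar> then nu j * (mu j * \<bar>x j\<bar>) powr (2 * p - 2) else 0)" for j
  define q where "q j = (r j * \<bar>x j\<bar>) powr p" for j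
  define v where "v j = (r j * \<bar>xh j\<bar>) powr p" for j
  define E where "E j = (a j * \<bar>x j - xh j\<bar>) powr 2" for j
  have q: "q summable_on UNIV" and v: "v summable_on UNIV"
    using x xh unfolding lp_space_def q_def v_def by auto
  have e: "e summable_on UNIV"
    unfolding e_def using lp_space_diff[OF _ _ x xh] r_pos p_gt_1
    by (intro summable_on_if_UNIV) (simp add: lp_space_def less_imp_le)
  have S: "S summable_on UNIV" unfolding S_def using q unfolding q_def by (rule summable_on_if_UNIV)
  have B: "B summable_on UNIV"
    unfolding B_def using summable_large_nu_mu_powr[OF x \<tau>, of "2 * p - 2"] p_lt_2 by simp
  have E: "E summable_on UNIV"
    using lp_space_diff[OF _ _ lp_space_imp_lp2[OF x] lp_space_imp_lp2[OF xh]] a_pos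
    unfolding lp_space_def E_def by (simp add: less_imp_le)
  have "2 powr (- p) * (\<Sum>\<^sub>\<infinity>j. e j) + (\<Sum>\<^sub>\<infinity>j. q j) = (\<Sum>\<^sub>\<infinity>j. 2 powr (- p) * e j + q j)"
    by (subst infsum_add infsum_cmult_right, (intro summable_on_cmult_right e q)+)+ simp
  also have "\<dots> \<le> (\<Sum>\<^sub>\<infinity>j. v j + 2 * S j + p * l / 2 * B j + p / (2 * l) * E j)"
    using variational_pointwise_split[OF l]
    by (intro infsum_mono summable_on_add summable_on_cmult_right e q v S B E)
       (simp add: e_def S_def B_def q_def v_def E_def)
  also have "\<dots> = (\<Sum>\<^sub>\<infinity>j. v j) + 2 * (\<Sum>\<^sub>\<infinity>j. S j) + p * l / 2 * (\<Sum>\<^sub>\<infinity>j. B j) + p / (2 * l) * (\<Sum>\<^sub>\<infinity>j. E j)"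
    by (subst infsum_add infsum_cmult_right,
        (intro summable_on_add summable_on_cmult_right v S B E)+)+ simp
  finally show ?thesis
    using p_gt_1 unfolding small_part_def large_part_def
    by (simp add: lp_norm_powr e_def S_def B_def q_def v_def E_def)
qed

lemma small_part_le_tail_bound:
  assumes x: "x \<in> lp_space p r" and tail: "tail_bound nu (\<lambda>j. mu j * \<bar>x j\<bar>) t R"
    and \<tau>: "\<tau> > 0" and t: "t < p"
  shows "small_part x \<tau> (\<lambda>j. (r j * \<bar>x j\<bar>) powr p) \<le> 2 powr t / (1 - 2 powr (t - p)) * R * \<tau> powr (p - t)"
  unfolding small_part_def
proof (rule infsum_le_finite_sums)
  show "(\<lambda>j. if mu j * \<bar>x j\<bar> \<le> \<tau> then (r j * \<bar>x j\<bar>) powr p else 0) summable_on UNIV"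
    using x unfolding lp_space_def by (intro summable_on_if_UNIV) simp
next
  fix F :: "'j set" assume "finite F"
  have "(\<Sum>j\<in>F. if mu j * \<bar>x j\<bar> \<le> \<tau> then (r j * \<bar>x j\<bar>) powr p else 0)
      = (\<Sum>j\<in>F. if mu j * \<bar>x j\<bar> \<le> \<tau> then nu j * (mu j * \<bar>x j\<bar>) powr p else 0)"
    by (intro sum.cong refl) (simp add: nu_mu_powr[OF abs_ge_zero])
  also have "\<dots> \<le> 2 powr t / (1 - 2 powr (t - p)) * R * \<tau> powr (p - t)"
    using tail_bound_sum_below[OF tail _ _ \<tau> _ t \<open>finite F\<close>] mu_pos nu_pos p_gt_1
    by (simp add: less_imp_le)
  finally show "(\<Sum>j\<in>F. if mu j * \<bar>x j\<bar> \<le> \<tau> then (r j * \<bar>x j\<bar>) powr p else 0)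
      \<le> 2 powr t / (1 - 2 powr (t - p)) * R * \<tau> powr (p - t)" .
qed

lemma large_part_le_tail_bound:
  assumes x: "x \<in> lp_space p r" and tail: "tail_bound nu (\<lambda>j. mu j * \<bar>x j\<bar>) t R"
    and \<tau>: "\<tau> > 0" and t: "2 * p - 2 < t"
  shows "large_part x \<tau> (\<lambda>j. nu j * (mu j * \<bar>x j\<bar>) powr (2 * p - 2))
         \<le> 2 powr (2 * p - 2) / (1 - 2 powr (2 * p - 2 - t)) * R * \<tau> powr (2 * p - 2 - t)"
  unfolding large_part_def
proof (rule infsum_le_finite_sums)
  show "(\<lambda>j. if \<tau> < mu j * \<bar>x j\<bar> then nu j * (mu j * \<bar>x j\<bar>) powr (2 * p - 2) else 0) summable_on UNIV"
    using summable_large_nu_mu_powr[OF x \<tau>] p_lt_2 by simp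
qed (use tail_bound_sum_above[OF tail _ \<tau> _ t] nu_pos p_gt_1 in \<open>simp add: less_imp_le\<close>)

lemma large_part_nu_le_tail_bound:
  assumes x: "x \<in> lp_space p r" and tail: "tail_bound nu (\<lambda>j. mu j * \<bar>x j\<bar>) t R" and \<tau>: "\<tau> > 0"
  shows "large_part x \<tau> nu \<le> R * \<tau> powr (- t)"
  unfolding large_part_def
  by (rule infsum_le_finite_sums[OF summable_large_nu[OF x \<tau>]])
     (use tail \<tau> in \<open>simp add: tail_bound_def\<close>)

lemma large_part_diff_le:
  assumes x: "x \<in> lp_space p r" and xh: "xh \<in> lp_space p r" and \<tau>: "\<tau> > 0"
  shows "large_part x \<tau> (\<lambda>j. (r j * \<bar>x j - xh j\<bar>) powr p)
         \<le> p / 2 * \<tau> powr (p - 2) * lp_norm 2 a (\<lambda>j. x j - xh j) powr 2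
           + (2 - p) / 2 * \<tau> powr p * large_part x \<tau> nu"
proof -
  define E where "E j = (a j * \<bar>x j - xh j\<bar>) powr 2" for j
  define N where "N j = (if \<tau> < mu j * \<bar>x j\<bar> then nu j else 0)" for j
  have E: "E summable_on UNIV"
    using lp_space_diff[OF _ _ lp_space_imp_lp2[OF x] lp_space_imp_lp2[OF xh]] a_pos
    unfolding lp_space_def E_def by (simp add: less_imp_le)
  have N: "N summable_on UNIV" unfolding N_def by (rule summable_large_nu[OF x \<tau>])
  have "large_part x \<tau> (\<lambda>j. (r j * \<bar>x j - xh j\<bar>) powr p)
      \<le> (\<Sum>\<^sub>\<infinity>j. p / 2 * \<tau> powr (p - 2) * E j + (2 - p) / 2 * \<tau> powr p * N j)"
    unfolding large_part_def
  proof (rule infsum_mono)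
    show "(\<lambda>j. if \<tau> < mu j * \<bar>x j\<bar> then (r j * \<bar>x j - xh j\<bar>) powr p else 0) summable_on UNIV"
      using lp_space_diff[OF _ _ x xh] r_pos p_gt_1 unfolding lp_space_def
      by (intro summable_on_if_UNIV) (simp add: less_imp_le)
    show "(\<lambda>j. p / 2 * \<tau> powr (p - 2) * E j + (2 - p) / 2 * \<tau> powr p * N j) summable_on UNIV"
      by (intro summable_on_add summable_on_cmult_right E N)
  qed (use young_weighted[OF \<tau>] p_gt_1 p_lt_2 in \<open>auto simp: E_def N_def\<close>)
  also have "\<dots> = p / 2 * \<tau> powr (p - 2) * (\<Sum>\<^sub>\<infinity>j. E j) + (2 - p) / 2 * \<tau> powr p * (\<Sum>\<^sub>\<infinity>j. N j)"
    by (subst infsum_add infsum_cmult_right, (intro summable_on_add summable_on_cmult_right E N)+)+ simp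
  finally show ?thesis
    using p_gt_1 by (simp add: lp_norm_powr E_def N_def large_part_def)
qed

lemma large_part_diff_le_tail_bound:
  assumes x: "x \<in> lp_space p r" and xh: "xh \<in> lp_space p r"
    and tail: "tail_bound nu (\<lambda>j. mu j * \<bar>x j\<bar>) t R" and \<tau>: "\<tau> > 0"
  shows "large_part x \<tau> (\<lambda>j. (r j * \<bar>x j - xh j\<bar>) powr p)
         \<le> p / 2 * lp_norm 2 a (\<lambda>j. x j - xh j) powr 2 / \<tau> powr (2 - p) + (2 - p) / 2 * (R * \<tau> powr (p - t))"
proof -
  have "\<tau> powr p * large_part x \<tau> nu \<le> \<tau> powr p * (R * \<tau> powr (- t))"
    using large_part_nu_le_tail_bound[OF x tail \<tau>] by (simp add: mult_left_mono)
  also have "\<dots> = R * \<tau> powr (p - t)" by (simp add: mult.left_commute powr_add[symmetric])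
  finally have "(2 - p) / 2 * (\<tau> powr p * large_part x \<tau> nu) \<le> (2 - p) / 2 * (R * \<tau> powr (p - t))"
    using p_lt_2 by (intro mult_left_mono) auto
  moreover have "\<tau> powr (p - 2) = 1 / \<tau> powr (2 - p)"
    using \<tau> by (simp add: powr_minus_divide[symmetric])
  ultimately show ?thesis
    using large_part_diff_le[OF x xh \<tau>] by (simp add: mult.assoc)
qed

end

section \<open>Balancing the error terms\<close>

definition discrepancy_constant :: "real \<Rightarrow> real \<Rightarrow> real \<Rightarrow> real \<Rightarrow> real \<Rightarrow> real" where
  "discrepancy_constant p M c\<^sub>S c\<^sub>B C\<^sub>D =
     (let k = M\<^sup>2 * (1 + C\<^sub>D)\<^sup>2 in 2 powr p * (2 * c\<^sub>S + p / 2 * c\<^sub>B + p / 2 * k) + (p / 2 * k + 1))"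

definition apriori_constant :: "real \<Rightarrow> real \<Rightarrow> real \<Rightarrow> real \<Rightarrow> real \<Rightarrow> real \<Rightarrow> real" where
  "apriori_constant p M c\<^sub>S c\<^sub>B c\<^sub>l c\<^sub>r =
     (let K = p / (2 * c\<^sub>l) + 2 * c\<^sub>S + 2 * p * M\<^sup>2 * c\<^sub>r * c\<^sub>B + p / (4 * c\<^sub>r)
      in 2 powr p * K + (p / 2 * (2 * M\<^sup>2 * (1 + 4 * c\<^sub>r * K / p)) + 1))"

lemma discrepancy_constant_pos:
  assumes "p > 0" "c\<^sub>S \<ge> 0" "c\<^sub>B \<ge> 0"
  shows "discrepancy_constant p M c\<^sub>S c\<^sub>B C\<^sub>D > 0"
  using assms unfolding discrepancy_constant_def Let_def
  by (intro add_nonneg_pos mult_nonneg_nonneg add_nonneg_nonneg add_pos_nonneg) auto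

definition rate_constant :: "real \<Rightarrow> real \<Rightarrow> real \<Rightarrow> real \<Rightarrow> real \<Rightarrow> real \<Rightarrow> real" where
  "rate_constant p t M c\<^sub>l c\<^sub>r C\<^sub>D =
     (let c\<^sub>S = 2 powr t / (1 - 2 powr (t - p));
          c\<^sub>B = 2 powr (2 * p - 2) / (1 - 2 powr (2 * p - 2 - t))
      in max (apriori_constant p M c\<^sub>S c\<^sub>B c\<^sub>l c\<^sub>r) (discrepancy_constant p M c\<^sub>S c\<^sub>B C\<^sub>D))"

lemma rate_constant_pos:
  assumes "0 < p" "t < p" "2 * p - 2 < t"
  shows "rate_constant p t M c\<^sub>l c\<^sub>r C\<^sub>D > 0"
proof -
  have "2 powr (t - p) < 1" "2 powr (2 * p - 2 - t) < 1" using assms by (auto intro!: powr_less_one)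
  then show ?thesis
    unfolding rate_constant_def Let_def using assms
    by (intro max.strict_coboundedI2 discrepancy_constant_pos) auto
qed

text \<open>\<open>Ps\<close> and \<open>Pb\<close> stand for the parts of \<open>\<parallel>x - xh\<parallel> powr p\<close> on the small and the large
  coordinates, \<open>E\<close> for the squared \<open>\<ell>\<^sup>2\<close>-error, \<open>res\<close> for the residual of \<open>xh\<close>, \<open>S\<close> and \<open>B\<close>
  for the two dyadic sums; \<open>T\<close> is the \<open>p\<close>-th power of the rate and \<open>\<epsilon>\<close> the scale of \<open>\<alpha>\<close>.\<close>

locale tikhonov_error_budget =
  fixes p M c\<^sub>S c\<^sub>B T \<epsilon> \<delta> res \<alpha> E Ps Pb S B :: real
  assumes p: "1 < p" "p < 2" and M: "M > 0" and c\<^sub>S: "c\<^sub>S \<ge> 0" and c\<^sub>B: "c\<^sub>B \<ge> 0"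
    and T: "T > 0" and \<epsilon>: "\<epsilon> > 0" and \<delta>: "\<delta> > 0" and res: "res \<ge> 0" and \<alpha>: "\<alpha> > 0"
    and balance: "\<delta>\<^sup>2 = T * \<epsilon>"
    and E_le: "E \<le> M\<^sup>2 * (\<delta> + res)\<^sup>2"
    and Ps_nonneg: "Ps \<ge> 0"
    and S_le: "S \<le> c\<^sub>S * T" and B_le: "B \<le> c\<^sub>B * T / \<epsilon>"
    and Pb_le: "Pb \<le> p / 2 * E / \<epsilon> + (2 - p) / 2 * T"
    and variational: "\<And>l. l > 0 \<Longrightarrow>
          2 powr (- p) * Ps \<le> p * (\<delta>\<^sup>2 - res\<^sup>2) / (2 * \<alpha>) + 2 * S + p * l / 2 * B + p / (2 * l) * E"
begin

lemma Pb_le_of_E_le: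
  assumes "E \<le> k * T * \<epsilon>"
  shows "Pb \<le> (p / 2 * k + 1) * T"
proof -
  have "p / 2 * E / \<epsilon> \<le> p / 2 * (k * T * \<epsilon>) / \<epsilon>"
    using assms p \<epsilon> by (intro divide_right_mono mult_left_mono) auto
  also have "\<dots> = p / 2 * k * T" using \<epsilon> by simp
  moreover have "(2 - p) / 2 * T \<le> 1 * T" using p T by (intro mult_right_mono) auto
  moreover have "(p / 2 * k + 1) * T = p / 2 * k * T + 1 * T" by (simp add: algebra_simps)
  ultimately show ?thesis using Pb_le by linarith
qed

lemma Ps_le_of_scaled_le:
  assumes "2 powr (- p) * Ps \<le> K * T"
  shows "Ps \<le> 2 powr p * K * T"
  using assms by (simp add: powr_minus field_simps)

lemma error_bound_discrepancy:
  assumes lower: "\<delta> \<le> res" and upper: "res \<le> C\<^sub>D * \<delta>"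
  shows "Ps + Pb \<le> discrepancy_constant p M c\<^sub>S c\<^sub>B C\<^sub>D * T"
proof -
  define k where "k = M\<^sup>2 * (1 + C\<^sub>D)\<^sup>2"
  have "(\<delta> + res)\<^sup>2 \<le> ((1 + C\<^sub>D) * \<delta>)\<^sup>2"
    using upper res \<delta> by (intro power_mono) (auto simp: distrib_right)
  then have E: "E \<le> k * T * \<epsilon>"
    using E_le balance M unfolding k_def
    by (smt (verit) mult.assoc mult_left_mono power_mult_distrib zero_le_power2)
  have "p * (\<delta>\<^sup>2 - res\<^sup>2) / (2 * \<alpha>) \<le> 0"
    using lower \<delta> p \<alpha> by (intro divide_nonpos_pos mult_nonneg_nonpos) (auto intro: power_mono)
  moreover have "p * \<epsilon> / 2 * B \<le> p / 2 * c\<^sub>B * T"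
    using mult_left_mono[OF B_le, of "p * \<epsilon> / 2"] p \<epsilon> by simp
  moreover have "p / (2 * \<epsilon>) * E \<le> p / 2 * k * T"
    using mult_left_mono[OF E, of "p / (2 * \<epsilon>)"] p \<epsilon> by simp
  ultimately have "2 powr (- p) * Ps \<le> (2 * c\<^sub>S + p / 2 * c\<^sub>B + p / 2 * k) * T"
    using variational[OF \<epsilon>] S_le by (simp add: algebra_simps)
  then have "Ps \<le> 2 powr p * (2 * c\<^sub>S + p / 2 * c\<^sub>B + p / 2 * k) * T"
    by (rule Ps_le_of_scaled_le)
  with Pb_le_of_E_le[OF E] show ?thesis
    unfolding discrepancy_constant_def k_def[symmetric] Let_def by (simp add: algebra_simps)
qed

lemma E_le_sum_squares: "E \<le> 2 * M\<^sup>2 * (\<delta>\<^sup>2 + res\<^sup>2)"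
proof -
  have "(\<delta> + res)\<^sup>2 \<le> 2 * (\<delta>\<^sup>2 + res\<^sup>2)"
    using sum_squares_bound[of \<delta> res] by (simp add: power2_eq_square algebra_simps)
  then have "M\<^sup>2 * (\<delta> + res)\<^sup>2 \<le> M\<^sup>2 * (2 * (\<delta>\<^sup>2 + res\<^sup>2))" by (intro mult_left_mono) auto
  moreover have "M\<^sup>2 * (2 * (\<delta>\<^sup>2 + res\<^sup>2)) = 2 * M\<^sup>2 * (\<delta>\<^sup>2 + res\<^sup>2)" by simp
  ultimately show ?thesis using E_le by linarith
qed

context
  fixes c\<^sub>l c\<^sub>r K :: real
  assumes c\<^sub>l: "c\<^sub>l > 0" and \<alpha>_ge: "c\<^sub>l * \<epsilon> \<le> \<alpha>" and \<alpha>_le: "\<alpha> \<le> c\<^sub>r * \<epsilon>"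
  defines "K \<equiv> p / (2 * c\<^sub>l) + 2 * c\<^sub>S + 2 * p * M\<^sup>2 * c\<^sub>r * c\<^sub>B + p / (4 * c\<^sub>r)"
begin

lemma c\<^sub>r_pos: "c\<^sub>r > 0"
  using c\<^sub>l \<epsilon> \<alpha> \<alpha>_le by (smt (verit) mult_nonpos_nonneg)

lemma K_nonneg: "K \<ge> 0"
  unfolding K_def using c\<^sub>l c\<^sub>r_pos c\<^sub>S c\<^sub>B p by simp

text \<open>With \<open>l = 4 M\<^sup>2 c\<^sub>r \<epsilon>\<close> half of the residual term \<open>p res\<^sup>2 / (2 \<alpha>)\<close> absorbs the
  residual hidden in \<open>E\<close>; the other half then bounds the residual itself.\<close>

lemma apriori_key: "2 powr (- p) * Ps + p * res\<^sup>2 / (4 * \<alpha>) \<le> K * T"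
proof -
  define l where "l = 4 * M\<^sup>2 * c\<^sub>r * \<epsilon>"
  have l: "l > 0" unfolding l_def using M c\<^sub>r_pos \<epsilon> by simp
  have \<delta>_term: "p * \<delta>\<^sup>2 / (2 * \<alpha>) \<le> p / (2 * c\<^sub>l) * T"
  proof -
    have "p * \<delta>\<^sup>2 / (2 * \<alpha>) \<le> p * (T * \<epsilon>) / (2 * (c\<^sub>l * \<epsilon>))"
      unfolding balance using \<alpha>_ge \<alpha> p T \<epsilon> c\<^sub>l by (intro divide_left_mono) auto
    then show ?thesis using \<epsilon> by (simp add: field_simps)
  qed
  have B_term: "p * l / 2 * B \<le> 2 * p * M\<^sup>2 * c\<^sub>r * c\<^sub>B * T"
    using mult_left_mono[OF B_le, of "p * l / 2"] p l \<epsilon> c\<^sub>r_pos by (simp add: l_def field_simps)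
  have E_term: "p / (2 * l) * E \<le> p / (4 * c\<^sub>r) * T + p * res\<^sup>2 / (4 * \<alpha>)"
  proof -
    have "p / (2 * l) * E \<le> p / (2 * l) * (2 * M\<^sup>2 * (\<delta>\<^sup>2 + res\<^sup>2))"
      using E_le_sum_squares p l by (intro mult_left_mono) auto
    also have "\<dots> = p / (4 * c\<^sub>r) * T + p * res\<^sup>2 / (4 * (c\<^sub>r * \<epsilon>))"
      unfolding l_def balance using \<epsilon> c\<^sub>r_pos M by (simp add: field_simps power2_eq_square)
    also have "p * res\<^sup>2 / (4 * (c\<^sub>r * \<epsilon>)) \<le> p * res\<^sup>2 / (4 * \<alpha>)"
      using \<alpha>_le \<alpha> p c\<^sub>r_pos \<epsilon> by (intro divide_left_mono) auto
    finally show ?thesis by simp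
  qed
  have "p * (\<delta>\<^sup>2 - res\<^sup>2) / (2 * \<alpha>) = p * \<delta>\<^sup>2 / (2 * \<alpha>) - 2 * (p * res\<^sup>2 / (4 * \<alpha>))"
    using \<alpha> by (simp add: field_simps)
  then show ?thesis
    using variational[OF l] \<delta>_term B_term E_term S_le unfolding K_def by (simp add: algebra_simps)
qed

lemma error_bound_apriori: "Ps + Pb \<le> apriori_constant p M c\<^sub>S c\<^sub>B c\<^sub>l c\<^sub>r * T"
proof -
  have res_term: "p * res\<^sup>2 / (4 * \<alpha>) \<ge> 0" using p \<alpha> by simp
  have Ps_term: "2 powr (- p) * Ps \<ge> 0" using Ps_nonneg by simp
  then have "Ps \<le> 2 powr p * K * T"
    using apriori_key res_term by (intro Ps_le_of_scaled_le) linarith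
  moreover have "res\<^sup>2 \<le> 4 * c\<^sub>r * K / p * T * \<epsilon>"
  proof -
    have "p * res\<^sup>2 / (4 * \<alpha>) \<le> K * T" using apriori_key Ps_term by linarith
    then have "p * res\<^sup>2 \<le> K * T * (4 * \<alpha>)" using \<alpha> by (simp add: divide_le_eq)
    also have "\<dots> \<le> K * T * (4 * (c\<^sub>r * \<epsilon>))"
      using \<alpha>_le T K_nonneg by (intro mult_left_mono) auto
    finally show ?thesis using p by (simp add: field_simps)
  qed
  then have "\<delta>\<^sup>2 + res\<^sup>2 \<le> (1 + 4 * c\<^sub>r * K / p) * T * \<epsilon>"
    using balance by (simp add: algebra_simps)
  then have "E \<le> 2 * M\<^sup>2 * ((1 + 4 * c\<^sub>r * K / p) * T * \<epsilon>)"
    using E_le_sum_squares by (smt (verit) mult_left_mono zero_le_power2)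
  then have "E \<le> 2 * M\<^sup>2 * (1 + 4 * c\<^sub>r * K / p) * T * \<epsilon>"
    by (simp add: mult.assoc)
  then have "Pb \<le> (p / 2 * (2 * M\<^sup>2 * (1 + 4 * c\<^sub>r * K / p)) + 1) * T"
    by (rule Pb_le_of_E_le)
  ultimately show ?thesis
    unfolding apriori_constant_def K_def[symmetric] Let_def by (simp add: distrib_right)
qed

end

end

locale tikhonov_operator = tikhonov_weights a r p
  for a r :: "'j \<Rightarrow> real" and p :: real +
  fixes A :: "('j \<Rightarrow> real) \<Rightarrow> 'y::real_normed_vector" and M :: real
  assumes A_add: "\<And>x y. x \<in> lp_space 2 a \<Longrightarrow> y \<in> lp_space 2 a \<Longrightarrow> A (\<lambda>j. x j + y j) = A x + A y"
    and A_scale: "\<And>c x. x \<in> lp_space 2 a \<Longrightarrow> A (\<lambda>j. c * x j) = c *\<^sub>R A x"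
    and M_pos: "M > 0"
    and A_lower: "\<And>x. x \<in> lp_space 2 a \<Longrightarrow> (1 / M) * lp_norm 2 a x \<le> norm (A x)"
begin

lemma A_diff:
  assumes "x \<in> lp_space 2 a" "y \<in> lp_space 2 a"
  shows "A (\<lambda>j. x j - y j) = A x - A y"
proof -
  have "(\<lambda>j. - 1 * y j) \<in> lp_space 2 a" using assms(2) by (simp add: lp_space_def)
  from A_add[OF assms(1) this] A_scale[OF assms(2), of "- 1"] show ?thesis by simp
qed

lemma lp2_error_le:
  assumes x: "x \<in> lp_space p r" and y: "y \<in> lp_space p r"
  shows "lp_norm 2 a (\<lambda>j. x j - y j) \<le> M * (norm (g - A x) + norm (g - A y))"
proof -
  have x2: "x \<in> lp_space 2 a" and y2: "y \<in> lp_space 2 a" using x y by (auto intro: lp_space_imp_lp2)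
  have "(1 / M) * lp_norm 2 a (\<lambda>j. x j - y j) \<le> norm (A x - A y)"
    using A_lower[OF lp_space_diff[OF _ _ x2 y2]] a_pos by (simp add: A_diff[OF x2 y2] less_imp_le)
  also have "A x - A y = (g - A y) - (g - A x)" by simp
  also have "norm \<dots> \<le> norm (g - A x) + norm (g - A y)"
    using norm_triangle_ineq4[of "g - A y" "g - A x"] by simp
  finally show ?thesis using M_pos by (simp add: field_simps)
qed

lemma minimizer_variational_inequality:
  assumes x: "x \<in> lp_space p r" and xh: "xh \<in> tikhonov_minimizers A p r \<alpha> g" and \<alpha>: "\<alpha> > 0"
    and noise: "norm (g - A x) \<le> \<delta>" and \<tau>: "\<tau> > 0" and l: "l > 0"
  shows "2 powr (- p) * small_part x \<tau> (\<lambda>j. (r j * \<bar>x j - xh j\<bar>) powr p)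
         \<le> p * (\<delta>\<^sup>2 - (norm (g - A xh))\<^sup>2) / (2 * \<alpha>) + 2 * small_part x \<tau> (\<lambda>j. (r j * \<bar>x j\<bar>) powr p)
           + p * l / 2 * large_part x \<tau> (\<lambda>j. nu j * (mu j * \<bar>x j\<bar>) powr (2 * p - 2))
           + p / (2 * l) * lp_norm 2 a (\<lambda>j. x j - xh j) powr 2"
proof -
  have "xh \<in> lp_space p r" using xh unfolding tikhonov_minimizers_def by simp
  have "(norm (g - A x))\<^sup>2 \<le> \<delta>\<^sup>2" using noise by (simp add: power_mono)
  then have "p * ((norm (g - A x))\<^sup>2 - (norm (g - A xh))\<^sup>2) / (2 * \<alpha>)
           \<le> p * (\<delta>\<^sup>2 - (norm (g - A xh))\<^sup>2) / (2 * \<alpha>)"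
    using p_gt_1 \<alpha> by (intro divide_right_mono mult_left_mono) auto
  then show ?thesis
    using variational_inequality_split[OF x \<open>xh \<in> lp_space p r\<close> \<tau> l] tikhonov_minimizer_le[OF xh x \<alpha>] p_gt_1
    by simp
qed

lemma error_budget:
  assumes x: "x \<in> lp_space p r" and tail: "tail_bound nu (\<lambda>j. mu j * \<bar>x j\<bar>) t (\<rho> powr t)"
    and t: "2 * p - 2 < t" "t < p" and \<rho>: "\<rho> > 0" and \<delta>: "\<delta> > 0" and \<tau>: "\<tau> > 0"
    and balance: "\<delta>\<^sup>2 = \<rho> powr t * \<tau> powr (2 - t)"
    and noise: "norm (g - A x) \<le> \<delta>" and \<alpha>: "\<alpha> > 0"
    and xh: "xh \<in> tikhonov_minimizers A p r \<alpha> g"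
  shows "tikhonov_error_budget p M (2 powr t / (1 - 2 powr (t - p)))
           (2 powr (2 * p - 2) / (1 - 2 powr (2 * p - 2 - t)))
           (\<rho> powr t * \<tau> powr (p - t)) (\<tau> powr (2 - p)) \<delta> (norm (g - A xh)) \<alpha>
           (lp_norm 2 a (\<lambda>j. x j - xh j) powr 2)
           (small_part x \<tau> (\<lambda>j. (r j * \<bar>x j - xh j\<bar>) powr p))
           (large_part x \<tau> (\<lambda>j. (r j * \<bar>x j - xh j\<bar>) powr p))
           (small_part x \<tau> (\<lambda>j. (r j * \<bar>x j\<bar>) powr p))
           (large_part x \<tau> (\<lambda>j. nu j * (mu j * \<bar>x j\<bar>) powr (2 * p - 2)))"
proof unfold_locales
  have xh_lp: "xh \<in> lp_space p r" using xh unfolding tikhonov_minimizers_def by simp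
  show "2 powr t / (1 - 2 powr (t - p)) \<ge> 0" "2 powr (2 * p - 2) / (1 - 2 powr (2 * p - 2 - t)) \<ge> 0"
    using t by (auto intro!: divide_nonneg_pos simp: powr_less_one)
  show "\<delta>\<^sup>2 = \<rho> powr t * \<tau> powr (p - t) * \<tau> powr (2 - p)"
    using balance \<tau> by (simp add: mult.assoc powr_add[symmetric])
  have "lp_norm 2 a (\<lambda>j. x j - xh j) \<le> M * (\<delta> + norm (g - A xh))"
    using lp2_error_le[OF x xh_lp, of g] noise M_pos by (smt (verit) mult_left_mono)
  then show "lp_norm 2 a (\<lambda>j. x j - xh j) powr 2 \<le> M\<^sup>2 * (\<delta> + norm (g - A xh))\<^sup>2"
    by (simp add: lp_norm_def power_mult_distrib[symmetric] power_mono)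
  show "small_part x \<tau> (\<lambda>j. (r j * \<bar>x j - xh j\<bar>) powr p) \<ge> 0"
    unfolding small_part_def by (intro infsum_nonneg) auto
  show "small_part x \<tau> (\<lambda>j. (r j * \<bar>x j\<bar>) powr p)
        \<le> 2 powr t / (1 - 2 powr (t - p)) * (\<rho> powr t * \<tau> powr (p - t))"
    using small_part_le_tail_bound[OF x tail \<tau> t(2)] by (simp add: mult.assoc)
  have "2 * p - 2 - t = (p - t) - (2 - p)" by simp
  then have "\<tau> powr (2 * p - 2 - t) = \<tau> powr (p - t) / \<tau> powr (2 - p)" by (simp only: powr_diff)
  then show "large_part x \<tau> (\<lambda>j. nu j * (mu j * \<bar>x j\<bar>) powr (2 * p - 2))
        \<le> 2 powr (2 * p - 2) / (1 - 2 powr (2 * p - 2 - t)) * (\<rho> powr t * \<tau> powr (p - t)) / \<tau> powr (2 - p)"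
    using large_part_le_tail_bound[OF x tail \<tau> t(1)] by (simp add: mult.assoc)
  show "large_part x \<tau> (\<lambda>j. (r j * \<bar>x j - xh j\<bar>) powr p)
        \<le> p / 2 * lp_norm 2 a (\<lambda>j. x j - xh j) powr 2 / \<tau> powr (2 - p)
          + (2 - p) / 2 * (\<rho> powr t * \<tau> powr (p - t))"
    by (rule large_part_diff_le_tail_bound[OF x xh_lp tail \<tau>])
qed (use minimizer_variational_inequality[OF x xh \<alpha> noise \<tau>] p_gt_1 p_lt_2 M_pos \<rho> \<tau> \<delta> \<alpha> in auto)

lemma error_estimate:
  assumes x: "x \<in> lp_space p r" and tail: "tail_bound nu (\<lambda>j. mu j * \<bar>x j\<bar>) t (\<rho> powr t)"
    and t: "2 * p - 2 < t" "t < p" and \<rho>: "\<rho> > 0" and \<delta>: "\<delta> > 0" and \<tau>: "\<tau> > 0"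
    and balance: "\<delta>\<^sup>2 = \<rho> powr t * \<tau> powr (2 - t)"
    and noise: "norm (g - A x) \<le> \<delta>" and \<alpha>: "\<alpha> > 0"
    and xh: "xh \<in> tikhonov_minimizers A p r \<alpha> g"
    and c\<^sub>l: "c\<^sub>l > 0" and c\<^sub>D: "c\<^sub>D \<ge> 1"
    and choice: "(c\<^sub>l * \<tau> powr (2 - p) \<le> \<alpha> \<and> \<alpha> \<le> c\<^sub>r * \<tau> powr (2 - p))
                 \<or> (c\<^sub>D * \<delta> \<le> norm (g - A xh) \<and> norm (g - A xh) \<le> C\<^sub>D * \<delta>)"
  shows "lp_norm p r (\<lambda>j. x j - xh j)
         \<le> rate_constant p t M c\<^sub>l c\<^sub>r C\<^sub>D powr (1 / p) * (\<rho> powr t * \<tau> powr (p - t)) powr (1 / p)"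
proof -
  interpret budget: tikhonov_error_budget p M "2 powr t / (1 - 2 powr (t - p))"
    "2 powr (2 * p - 2) / (1 - 2 powr (2 * p - 2 - t))" "\<rho> powr t * \<tau> powr (p - t)" "\<tau> powr (2 - p)"
    \<delta> "norm (g - A xh)" \<alpha> "lp_norm 2 a (\<lambda>j. x j - xh j) powr 2"
    "small_part x \<tau> (\<lambda>j. (r j * \<bar>x j - xh j\<bar>) powr p)" "large_part x \<tau> (\<lambda>j. (r j * \<bar>x j - xh j\<bar>) powr p)"
    "small_part x \<tau> (\<lambda>j. (r j * \<bar>x j\<bar>) powr p)"
    "large_part x \<tau> (\<lambda>j. nu j * (mu j * \<bar>x j\<bar>) powr (2 * p - 2))"
    by (rule error_budget[OF x tail t \<rho> \<delta> \<tau> balance noise \<alpha> xh])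
  define K where "K = rate_constant p t M c\<^sub>l c\<^sub>r C\<^sub>D"
  have "lp_norm p r (\<lambda>j. x j - xh j) powr p
      = small_part x \<tau> (\<lambda>j. (r j * \<bar>x j - xh j\<bar>) powr p) + large_part x \<tau> (\<lambda>j. (r j * \<bar>x j - xh j\<bar>) powr p)"
  proof (subst small_part_add_large_part)
    show "(\<lambda>j. (r j * \<bar>x j - xh j\<bar>) powr p) summable_on UNIV"
      using lp_space_diff[OF _ _ x, of xh] xh r_pos p_gt_1
      by (simp add: lp_space_def tikhonov_minimizers_def less_imp_le)
  qed (use p_gt_1 in \<open>simp add: lp_norm_powr\<close>)
  also have "\<dots> \<le> K * (\<rho> powr t * \<tau> powr (p - t))"
    using choice
  proof
    assume "c\<^sub>l * \<tau> powr (2 - p) \<le> \<alpha> \<and> \<alpha> \<le> c\<^sub>r * \<tau> powr (2 - p)"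
    then show ?thesis
      using budget.error_bound_apriori[OF c\<^sub>l] budget.T
      unfolding K_def rate_constant_def Let_def by (smt (verit) max.cobounded1 mult_right_mono)
  next
    assume "c\<^sub>D * \<delta> \<le> norm (g - A xh) \<and> norm (g - A xh) \<le> C\<^sub>D * \<delta>"
    moreover have "\<delta> \<le> c\<^sub>D * \<delta>" using c\<^sub>D \<delta> by simp
    ultimately show ?thesis
      using budget.error_bound_discrepancy[of C\<^sub>D] budget.T
      unfolding K_def rate_constant_def Let_def by (smt (verit) max.cobounded2 mult_right_mono)
  qed
  finally have "lp_norm p r (\<lambda>j. x j - xh j) powr p \<le> K * (\<rho> powr t * \<tau> powr (p - t))" .
  then have "(lp_norm p r (\<lambda>j. x j - xh j) powr p) powr (1 / p) \<le> (K * (\<rho> powr t * \<tau> powr (p - t))) powr (1 / p)"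
    using p_gt_1 by (intro powr_mono2) auto
  moreover have "lp_norm p r (\<lambda>j. x j - xh j) \<ge> 0" by (simp add: lp_norm_def)
  ultimately show ?thesis
    using p_gt_1 \<rho> \<tau> rate_constant_pos[OF _ t(2) t(1)] by (simp add: K_def powr_powr powr_mult)
qed

lemma convergence_rate:
  assumes t: "2 * p - 2 < t" "t < p" and \<delta>: "\<delta> > 0" and \<rho>: "\<rho> > 0" and x: "x \<in> lp_space p r"
    and weak: "weak_norm_pow t mu nu x \<le> ennreal (\<rho> powr t)"
    and noise: "norm (g - A x) \<le> \<delta>" and \<alpha>: "\<alpha> > 0" and xh: "xh \<in> tikhonov_minimizers A p r \<alpha> g"
    and c\<^sub>l: "c\<^sub>l > 0" and c\<^sub>D: "c\<^sub>D \<ge> 1"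
    and choice: "(c\<^sub>l * \<rho> powr (- t * (2 - p) / (2 - t)) * \<delta> powr (2 * (2 - p) / (2 - t)) \<le> \<alpha> \<and>
                  \<alpha> \<le> c\<^sub>r * \<rho> powr (- t * (2 - p) / (2 - t)) * \<delta> powr (2 * (2 - p) / (2 - t)))
                 \<or> (c\<^sub>D * \<delta> \<le> norm (g - A xh) \<and> norm (g - A xh) \<le> C\<^sub>D * \<delta>)"
  shows "lp_norm p r (\<lambda>j. x j - xh j)
         \<le> rate_constant p t M c\<^sub>l c\<^sub>r C\<^sub>D powr (1 / p)
           * \<rho> powr (t * (2 - p) / (p * (2 - t))) * \<delta> powr (2 * (p - t) / (p * (2 - t)))"
proof -
  obtain \<tau> where \<tau>: "\<tau> > 0" and balance: "\<delta>\<^sup>2 = \<rho> powr t * \<tau> powr (2 - t)"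
    and window: "\<rho> powr (- t * (2 - p) / (2 - t)) * \<delta> powr (2 * (2 - p) / (2 - t)) = \<tau> powr (2 - p)"
    and rate: "(\<rho> powr t * \<tau> powr (p - t)) powr (1 / p)
               = \<rho> powr (t * (2 - p) / (p * (2 - t))) * \<delta> powr (2 * (p - t) / (p * (2 - t)))"
    using balancing_scale[OF \<delta> \<rho>, of t p] p_gt_1 p_lt_2 t by auto
  have "tail_bound nu (\<lambda>j. mu j * \<bar>x j\<bar>) t (\<rho> powr t)"
    using weak_norm_pow_le_imp_tail_bound[OF _ weak] nu_pos by (simp add: less_imp_le)
  from error_estimate[OF x this t \<rho> \<delta> \<tau> balance noise \<alpha> xh c\<^sub>l c\<^sub>D choice[unfolded mult.assoc window]]
  show ?thesis using rate by (simp add: mult.assoc)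
qed

end

theorem corollary2p4:
  fixes a r :: "'j::countable \<Rightarrow> real"
    and A :: "('j \<Rightarrow> real) \<Rightarrow> 'y::{real_inner, complete_space}"
    and M p t c\<^sub>l c\<^sub>r c\<^sub>D C\<^sub>D :: real
  assumes a_pos: "\<And>j. a j > 0" and r_pos: "\<And>j. r j > 0"
    and ar_bdd: "bounded (range (\<lambda>j. a j / r j))"
    and A_add: "\<And>x y. x \<in> lp_space 2 a \<Longrightarrow> y \<in> lp_space 2 a \<Longrightarrow> A (\<lambda>j. x j + y j) = A x + A y"
    and A_scale: "\<And>c x. x \<in> lp_space 2 a \<Longrightarrow> A (\<lambda>j. c * x j) = c *\<^sub>R A x"
    and M_ge: "M \<ge> 1"
    and A_lower: "\<And>x. x \<in> lp_space 2 a \<Longrightarrow> (1 / M) * lp_norm 2 a x \<le> norm (A x)"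
    and A_upper: "\<And>x. x \<in> lp_space 2 a \<Longrightarrow> norm (A x) \<le> M * lp_norm 2 a x"
    and p: "1 < p" "p < 2"
    and t: "2 * p - 2 < t" "t < p"
    and c: "c\<^sub>r \<ge> c\<^sub>l" "c\<^sub>l > 0"
    and cD: "C\<^sub>D > c\<^sub>D" "c\<^sub>D > 1"
  shows "\<exists>C>0. \<forall>x \<delta> \<rho> g \<alpha> xh.
     \<delta> > 0 \<longrightarrow> \<rho> > 0 \<longrightarrow>
     x \<in> lp_space p r \<longrightarrow>
     x \<in> weak_space t (\<lambda>j. (a j ^ 2 * r j powr (- p)) powr (1 / (2 - p)))
                       (\<lambda>j. (r j / a j) powr (2 * p / (2 - p))) \<longrightarrow>
     weak_norm_pow t (\<lambda>j. (a j ^ 2 * r j powr (- p)) powr (1 / (2 - p)))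
                     (\<lambda>j. (r j / a j) powr (2 * p / (2 - p))) x \<le> ennreal (\<rho> powr t) \<longrightarrow>
     norm (g - A x) \<le> \<delta> \<longrightarrow>
     \<alpha> > 0 \<longrightarrow>
     xh \<in> tikhonov_minimizers A p r \<alpha> g \<longrightarrow>
     ((c\<^sub>l * \<rho> powr (- t * (2 - p) / (2 - t)) * \<delta> powr (2 * (2 - p) / (2 - t)) \<le> \<alpha> \<and>
       \<alpha> \<le> c\<^sub>r * \<rho> powr (- t * (2 - p) / (2 - t)) * \<delta> powr (2 * (2 - p) / (2 - t)))
      \<or> (c\<^sub>D * \<delta> \<le> norm (g - A xh) \<and> norm (g - A xh) \<le> C\<^sub>D * \<delta>)) \<longrightarrow>
     lp_norm p r (\<lambda>j. x j - xh j)
       \<le> C * \<rho> powr (t * (2 - p) / (p * (2 - t))) * \<delta> powr (2 * (p - t) / (p * (2 - t)))"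
proof -
  interpret tikhonov_operator a r p A M
    using a_pos r_pos ar_bdd p A_add A_scale M_ge A_lower by unfold_locales auto
  have mu_eq: "(\<lambda>j. (a j ^ 2 * r j powr (- p)) powr (1 / (2 - p))) = mu"
    and nu_eq: "(\<lambda>j. (r j / a j) powr (2 * p / (2 - p))) = nu"
    by (simp_all add: fun_eq_iff mu_def nu_def)
  have "rate_constant p t M c\<^sub>l c\<^sub>r C\<^sub>D powr (1 / p) > 0"
    using rate_constant_pos[of p t M c\<^sub>l c\<^sub>r C\<^sub>D] p t by simp
  then show ?thesis
    unfolding mu_eq nu_eq
    by (intro exI[of _ "rate_constant p t M c\<^sub>l c\<^sub>r C\<^sub>D powr (1 / p)"] conjI allI impI
              convergence_rate[OF t _ _ _ _ _ _ _ c(2) less_imp_le[OF cD(2)]])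
qed

end
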